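(* For $n\ge 2$, let $\overline{\mathcal M}_{\neq}(n)$ be the number of MAU pairs $(u,v)$ of binary words with $|u|=|v|=n$ and $|u|_c\ne|v|_c$ for some $c\in\{a,b\}$. Then $$\overline{\mathcal M}_{\neq}(n)=2\sum_{r_2=0}^{n-2}\ \sum_{r_1=r_2+2}^{n}{}_{A}N_{O}^{B_{r_2}},$$ where, for each $(r_1,r_2)$, $A=(r_2-r_1,\,r_1-r_2)$, $O=(0,0)$ and $B_{r_2}=(r_2,\,n-r_2)$.
   Context: Let $\Sigma=\{a,b\}$. For a word $w$ and a letter $c$, $|w|_c$ denotes the number of occurrences of $c$ in $w$. Two words $x,y$ are abelian equivalent, written $x\sim_{\mathrm{abl}}y$, if $|x|_c=|y|_c$ for all $c\in\Sigma$. For words $u,v$: a pair $(x,y)$ is an internal abelian-border of $(u,v)$ if $x$ is a nonempty proper suffix of $u$, $y$ is a proper prefix of $v$, and $x\sim_{\mathrm{abl}}y$; it is an external abelian-border of $(u,v)$ if $x$ is a nonempty proper prefix of $u$, $y$ is a proper suffix of $v$, and $x\sim_{\mathrm{abl}}y$. The pair $(u,v)$ is mutually abelian-bordered (MAB) if it has both an internal and an external abelian-border, and mutually abelian-unbordered (MAU) if it has neither. A lattice path is a finite sequence of points of $\mathbb Z^2$ in which each consecutive difference is $(1,0)$ (an east step) or $(0,1)$ (a north step). The word $w(p)\in\Sigma^*$ of a lattice path $p$ records its steps in order, writing $a$ for an east step and $b$ for a north step; conversely, for a point $A\in\mathbb Z^2$ and a word $w$, $p_A(w)$ is the lattice path starting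 at $A$ whose word is $w$. For lattice paths $p,q$, $p\cap q$ denotes the set of lattice points lying on both. For distinct lattice points $A,B,C$, ${}_{A}\mathcal N_{B}^{C}$ is the set of triples $(p,q,p')$ where $p$ is a lattice path from $A$ to $C$, $q$ is a lattice path from $B$ to $C$, $p'=p_B(w(p))$, $p\cap q=\{C\}$ and $q\cap p'=\{B\}$; and ${}_{A}N_{B}^{C}=|{}_{A}\mathcal N_{B}^{C}|$. *)

theory Defs
  imports Main "HOL-Library.Sublist"
begin

datatype letter = La | Lb

definition abl_eq :: "letter list \<Rightarrow> letter list \<Rightarrow> bool" where
  "abl_eq x y \<longleftrightarrow> (\<forall>c. count_list x c = count_list y c)"

definition internal_abl_border :: "letter list \<Rightarrow> letter list \<Rightarrow> letter list \<Rightarrow> letter list \<Rightarrow> bool" where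
  "internal_abl_border u v x y \<longleftrightarrow>
     x \<noteq> [] \<and> strict_suffix x u \<and> strict_prefix y v \<and> abl_eq x y"

definition external_abl_border :: "letter list \<Rightarrow> letter list \<Rightarrow> letter list \<Rightarrow> letter list \<Rightarrow> bool" where
  "external_abl_border u v x y \<longleftrightarrow>
     x \<noteq> [] \<and> strict_prefix x u \<and> strict_suffix y v \<and> abl_eq x y"

definition MAU :: "letter list \<Rightarrow> letter list \<Rightarrow> bool" where
  "MAU u v \<longleftrightarrow> \<not> (\<exists>x y. internal_abl_border u v x y) \<and> \<not> (\<exists>x y. external_abl_border u v x y)"

type_synonym pt = "int \<times> int"

definition east_step :: "pt \<Rightarrow> pt \<Rightarrow> bool" where
  "east_step P Q \<longleftrightarrow> fst Q = fst P + 1 \<and> snd Q = snd P"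

definition north_step :: "pt \<Rightarrow> pt \<Rightarrow> bool" where
  "north_step P Q \<longleftrightarrow> fst Q = fst P \<and> snd Q = snd P + 1"

definition lattice_path :: "pt list \<Rightarrow> bool" where
  "lattice_path p \<longleftrightarrow> p \<noteq> [] \<and>
     (\<forall>i. Suc i < length p \<longrightarrow> east_step (p ! i) (p ! Suc i) \<or> north_step (p ! i) (p ! Suc i))"

definition path_word :: "pt list \<Rightarrow> letter list" where
  "path_word p = map (\<lambda>i. if east_step (p ! i) (p ! Suc i) then La else Lb) [0..<length p - 1]"

fun letter_step :: "pt \<Rightarrow> letter \<Rightarrow> pt" where
  "letter_step (x, y) La = (x + 1, y)"
| "letter_step (x, y) Lb = (x, y + 1)"

fun path_from :: "pt \<Rightarrow> letter list \<Rightarrow> pt list" where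
  "path_from P [] = [P]"
| "path_from P (c # w) = P # path_from (letter_step P c) w"

definition path_between :: "pt \<Rightarrow> pt \<Rightarrow> pt list \<Rightarrow> bool" where
  "path_between P Q p \<longleftrightarrow> lattice_path p \<and> hd p = P \<and> last p = Q"

definition NSet :: "pt \<Rightarrow> pt \<Rightarrow> pt \<Rightarrow> (pt list \<times> pt list \<times> pt list) set" where
  "NSet A B C = {(p, q, p'). path_between A C p \<and> path_between B C q \<and>
       p' = path_from B (path_word p) \<and> set p \<inter> set q = {C} \<and> set q \<inter> set p' = {B}}"

definition NCount :: "pt \<Rightarrow> pt \<Rightarrow> pt \<Rightarrow> nat" where
  "NCount A B C = card (NSet A B C)"

end

theory Submission
  imports Defs
begin

(* With w = rev v, a suffix of v is the reverse of a prefix of w of the same length, so (u, v)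
   is mutually abelian-unbordered iff for 0 < k < n the length-k prefixes, and the length-k
   suffixes, of u and w have different numbers of a's. When |u|_a <> |v|_a this extends to all
   prefix lengths 1..n and suffix lengths 0..n-1. On lattice paths this says that p_O(w) meets
   p_O(u) only at O and meets p_A(u) only at their common endpoint B, where A = (r2 - r1, r1 - r2),
   B = (r2, n - r2), r1 = |u|_a and r2 = |w|_a: exactly the triples counted by N.
   The prefix difference d k = |take k u|_a - |take k w|_a changes by at most one per letter and,
   for 0 < k < n, avoids both 0 and d n. So d n = 1 would force d 1 = -1 and then a zero of d in
   1..n; hence |r1 - r2| >= 2, and swapping u and w accounts for the factor 2. *)

abbreviation acount :: "letter list \<Rightarrow> nat" where
  "acount w \<equiv> count_list w La"

lemma length_eq_acount_add_count_Lb: "length w = acount w + count_list w Lb"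
proof (induction w)
  case (Cons c w)
  then show ?case by (cases c) auto
qed simp

lemma acount_take_drop: "acount (take k w) + acount (drop k w) = acount w"
  by (metis append_take_drop_id count_list_append)

lemma acount_take_Suc_le: "acount (take (Suc k) w) \<le> Suc (acount (take k w))"
  by (cases "k < length w") (simp_all add: take_Suc_conv_app_nth)

lemma acount_take_mono: "k \<le> j \<Longrightarrow> acount (take k w) \<le> acount (take j w)"
  by (metis count_list_append le_add1 take_add le_add_diff_inverse)


section \<open>Abelian borders\<close>

lemma abl_eq_iff: "abl_eq x y \<longleftrightarrow> length x = length y \<and> acount x = acount y"
proof
  assume "abl_eq x y"
  then show "length x = length y \<and> acount x = acount y"
    unfolding abl_eq_def by (simp add: length_eq_acount_add_count_Lb)
next
  assume "length x = length y \<and> acount x = acount y"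
  then have "count_list x c = count_list y c" for c
    using length_eq_acount_add_count_Lb[of x] length_eq_acount_add_count_Lb[of y]
    by (cases c) simp_all
  then show "abl_eq x y"
    unfolding abl_eq_def by blast
qed

lemma strict_prefix_iff_take: "strict_prefix y v \<longleftrightarrow> (\<exists>k < length v. y = take k v)"
proof
  assume "strict_prefix y v"
  then show "\<exists>k < length v. y = take k v"
    by (auto simp: strict_prefix_def prefix_def intro!: exI[of _ "length y"])
qed (auto simp: strict_prefix_def take_is_prefix dest: arg_cong[of _ _ length])

lemma strict_suffix_iff_drop: "strict_suffix x u \<longleftrightarrow> (\<exists>k. 0 < k \<and> k \<le> length u \<and> x = drop k u)"
proof
  assume "strict_suffix x u"
  then show "\<exists>k. 0 < k \<and> k \<le> length u \<and> x = drop k u"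
    by (auto simp: strict_suffix_def suffix_def intro!: exI[of _ "length u - length x"])
qed (auto simp: strict_suffix_def suffix_drop dest: arg_cong[of _ _ length])

lemma internal_abl_border_iff:
  assumes "length v = length u"
  shows "(\<exists>x y. internal_abl_border u v x y) \<longleftrightarrow>
    (\<exists>k. 0 < k \<and> k < length u \<and> acount (drop k u) = acount (drop k (rev v)))"
proof
  assume "\<exists>x y. internal_abl_border u v x y"
  then obtain j k where "0 < j" "j < length u" "k < length u"
    "abl_eq (drop j u) (take k v)"
    unfolding internal_abl_border_def strict_suffix_iff_drop strict_prefix_iff_take
    using assms by fastforce
  then show "\<exists>k. 0 < k \<and> k < length u \<and> acount (drop k u) = acount (drop k (rev v))"
    using assms by (auto simp: abl_eq_iff drop_rev)
next
  assume "\<exists>k. 0 < k \<and> k < length u \<and> acount (drop k u) = acount (drop k (rev v))"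
  then obtain k where "0 < k" "k < length u" "acount (drop k u) = acount (drop k (rev v))"
    by blast
  moreover have "strict_prefix (take (length u - k) v) v"
    unfolding strict_prefix_iff_take using \<open>0 < k\<close> \<open>k < length u\<close> assms
    by (intro exI[of _ "length u - k"]) auto
  ultimately have "internal_abl_border u v (drop k u) (take (length u - k) v)"
    using assms
    by (auto simp: internal_abl_border_def strict_suffix_iff_drop abl_eq_iff drop_rev)
  then show "\<exists>x y. internal_abl_border u v x y"
    by blast
qed

lemma external_abl_border_iff:
  assumes "length v = length u"
  shows "(\<exists>x y. external_abl_border u v x y) \<longleftrightarrow>
    (\<exists>k. 0 < k \<and> k < length u \<and> acount (take k u) = acount (take k (rev v)))"
proof
  assume "\<exists>x y. external_abl_border u v x y"
  then obtain j k where "j < length u" "0 < k" "k \<le> length u" "take j u \<noteq> []"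
    "abl_eq (take j u) (drop k v)"
    unfolding external_abl_border_def strict_suffix_iff_drop strict_prefix_iff_take
    using assms by fastforce
  then show "\<exists>k. 0 < k \<and> k < length u \<and> acount (take k u) = acount (take k (rev v))"
    using assms by (intro exI[of _ j]) (auto simp: abl_eq_iff take_rev)
next
  assume "\<exists>k. 0 < k \<and> k < length u \<and> acount (take k u) = acount (take k (rev v))"
  then obtain k where "0 < k" "k < length u" "acount (take k u) = acount (take k (rev v))"
    by blast
  moreover have "strict_suffix (drop (length u - k) v) v"
    unfolding strict_suffix_iff_drop using \<open>0 < k\<close> \<open>k < length u\<close> assms
    by (intro exI[of _ "length u - k"]) auto
  ultimately have "external_abl_border u v (take k u) (drop (length u - k) v)"
    using assms
    by (auto simp: external_abl_border_def strict_prefix_iff_take abl_eq_iff take_rev)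
  then show "\<exists>x y. external_abl_border u v x y"
    by blast
qed

lemma MAU_iff_acount:
  assumes "length v = length u"
  shows "MAU u v \<longleftrightarrow> (\<forall>k. 0 < k \<and> k < length u \<longrightarrow>
    acount (take k u) \<noteq> acount (take k (rev v)) \<and> acount (drop k u) \<noteq> acount (drop k (rev v)))"
  unfolding MAU_def internal_abl_border_iff[OF assms] external_abl_border_iff[OF assms] by blast


section \<open>Separated pairs of words\<close>

definition prefix_separated :: "letter list \<Rightarrow> letter list \<Rightarrow> bool" where
  "prefix_separated u w \<longleftrightarrow> (\<forall>k. 0 < k \<and> k \<le> length u \<longrightarrow> acount (take k u) \<noteq> acount (take k w))"

definition suffix_separated :: "letter list \<Rightarrow> letter list \<Rightarrow> bool" where
  "suffix_separated u w \<longleftrightarrow> (\<forall>k < length u. acount (drop k u) \<noteq> acount (drop k w))"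

lemma prefix_separated_iff:
  assumes "length w = length u"
  shows "prefix_separated u w \<longleftrightarrow>
    (\<forall>k. 0 < k \<and> k < length u \<longrightarrow> acount (take k u) \<noteq> acount (take k w)) \<and>
    (0 < length u \<longrightarrow> acount u \<noteq> acount w)"
  using assms unfolding prefix_separated_def by (metis nat_less_le take_all_iff order_refl)

lemma suffix_separated_iff:
  "suffix_separated u w \<longleftrightarrow>
    (\<forall>k. 0 < k \<and> k < length u \<longrightarrow> acount (drop k u) \<noteq> acount (drop k w)) \<and>
    (0 < length u \<longrightarrow> acount u \<noteq> acount w)"
  unfolding suffix_separated_def by (metis drop0 gr0I)

lemma MAU_unbalanced_iff_separated:
  assumes "length v = length u" and "0 < length u"
  shows "MAU u v \<and> acount u \<noteq> acount v \<longleftrightarrow> prefix_separated u (rev v) \<and> suffix_separated u (rev v)"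
  using assms by (simp add: MAU_iff_acount prefix_separated_iff suffix_separated_iff) blast

lemma prefix_separated_commute:
  "length w = length u \<Longrightarrow> prefix_separated w u \<longleftrightarrow> prefix_separated u w"
  unfolding prefix_separated_def by (metis (mono_tags))

lemma suffix_separated_commute:
  "length w = length u \<Longrightarrow> suffix_separated w u \<longleftrightarrow> suffix_separated u w"
  unfolding suffix_separated_def by (metis (mono_tags))

lemma separated_acount_ne_Suc:
  assumes "length w = length u" and "2 \<le> length u"
    and pre: "prefix_separated u w" and suf: "suffix_separated u w"
  shows "acount u \<noteq> Suc (acount w)"
proof
  assume unit_gap: "acount u = Suc (acount w)"
  define d where "d k = int (acount (take k u)) - int (acount (take k w))" for k
  have step: "\<bar>d (Suc k) - d k\<bar> \<le> 1" for k
    using acount_take_Suc_le[of k u] acount_take_Suc_le[of k w]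
      acount_take_mono[of k "Suc k" u] acount_take_mono[of k "Suc k" w]
    unfolding d_def by linarith
  have "d 1 \<noteq> 0"
    using pre assms(2) by (simp add: prefix_separated_def d_def)
  moreover have "d 1 \<noteq> 1"
  proof -
    have "acount (drop 1 u) \<noteq> acount (drop 1 w)"
      using suf assms(2) by (simp add: suffix_separated_def)
    then show ?thesis
      using unit_gap acount_take_drop[of 1 u] acount_take_drop[of 1 w] unfolding d_def by linarith
  qed
  moreover have "\<bar>d 1\<bar> \<le> 1"
    using step[of 0] by (simp add: d_def)
  ultimately have "d 1 \<le> 0"
    by linarith
  moreover have "0 \<le> d (length u)"
    using unit_gap assms(1) by (simp add: d_def)
  ultimately obtain i where "1 \<le> i" "i \<le> length u" "d i = 0"
    using nat_intermed_int_val[of 1 "length u" d 0] step assms(2) by auto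
  then show False
    using pre by (simp add: prefix_separated_def d_def)
qed


section \<open>Lattice paths of words\<close>

definition path_point :: "pt \<Rightarrow> letter list \<Rightarrow> nat \<Rightarrow> pt" where
  "path_point P w k = (fst P + int (acount (take k w)), snd P + int k - int (acount (take k w)))"

lemma path_point_eq_iff:
  "path_point P u i = path_point Q v j \<longleftrightarrow>
     fst P + snd P + int i = fst Q + snd Q + int j \<and>
     fst P + int (acount (take i u)) = fst Q + int (acount (take j v))"
  by (auto simp: path_point_def)

lemma inj_path_point: "inj (path_point P w)"
  by (rule injI) (simp add: path_point_eq_iff)

lemma path_point_length:
  "path_point P w (length w) = (fst P + int (acount w), snd P + int (length w) - int (acount w))"
  by (simp add: path_point_def)

lemma length_path_from [simp]: "length (path_from P w) = Suc (length w)"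
  by (induction w arbitrary: P) auto

lemma path_from_neq_Nil [simp]: "path_from P w \<noteq> []"
  by (cases w) auto

lemma hd_path_from [simp]: "hd (path_from P w) = P"
  by (cases w) auto

lemma nth_path_from: "k \<le> length w \<Longrightarrow> path_from P w ! k = path_point P w k"
proof (induction w arbitrary: P k)
  case Nil
  then show ?case by (simp add: path_point_def)
next
  case (Cons c w)
  then show ?case
    by (cases k; cases P; cases c) (auto simp: path_point_def)
qed

lemma set_path_from: "set (path_from P w) = path_point P w ` {..length w}"
  by (force simp: set_conv_nth nth_path_from less_Suc_eq_le)

lemma last_path_from: "last (path_from P w) = path_point P w (length w)"
  by (metis last_conv_nth length_path_from diff_Suc_1 nth_path_from order_refl
      length_greater_0_conv zero_less_Suc)

lemma east_step_letter_step: "east_step P (letter_step P c) \<longleftrightarrow> c = La"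
  by (cases P; cases c) (auto simp: east_step_def)

lemma north_step_letter_step: "north_step P (letter_step P c) \<longleftrightarrow> c = Lb"
  by (cases P; cases c) (auto simp: north_step_def)

lemma lattice_path_Cons:
  "p \<noteq> [] \<Longrightarrow>
   lattice_path (x # p) \<longleftrightarrow> (east_step x (hd p) \<or> north_step x (hd p)) \<and> lattice_path p"
  by (cases p) (auto simp: lattice_path_def nth_Cons split: nat.splits)

lemma path_word_Cons:
  "p \<noteq> [] \<Longrightarrow> path_word (x # p) = (if east_step x (hd p) then La else Lb) # path_word p"
  by (cases p) (simp_all add: path_word_def map_upt_Suc del: upt_Suc)

lemma path_word_path_from [simp]: "path_word (path_from P w) = w"
proof (induction w arbitrary: P)
  case (Cons c w)
  then show ?case by (cases c) (simp_all add: path_word_Cons east_step_letter_step)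
qed (simp add: path_word_def)

lemma lattice_path_path_from: "lattice_path (path_from P w)"
proof (induction w arbitrary: P)
  case (Cons c w)
  then show ?case
    by (cases c) (simp_all add: lattice_path_Cons east_step_letter_step north_step_letter_step)
qed (simp add: lattice_path_def)

lemma path_from_path_word: "lattice_path p \<Longrightarrow> path_from (hd p) (path_word p) = p"
proof (induction p rule: induct_list012)
  case (3 x y r)
  then have "letter_step x (if east_step x y then La else Lb) = y"
    by (cases x; cases y) (auto simp: lattice_path_Cons east_step_def north_step_def)
  with 3 show ?case by (simp add: path_word_Cons lattice_path_Cons)
qed (simp_all add: lattice_path_def path_word_def)

lemma path_from_eq_iff: "path_from P u = path_from P w \<longleftrightarrow> u = w"
  by (metis path_word_path_from)

lemma path_between_iff:
  "path_between P C p \<longleftrightarrow> (\<exists>w. p = path_from P w \<and> path_point P w (length w) = C)"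
proof
  assume "path_between P C p"
  then show "\<exists>w. p = path_from P w \<and> path_point P w (length w) = C"
    unfolding path_between_def
    by (metis path_from_path_word last_path_from)
qed (auto simp: path_between_def lattice_path_path_from last_path_from)

lemma set_path_from_Int:
  assumes "length v = length u" and "fst P + snd P = fst Q + snd Q"
  shows "set (path_from P u) \<inter> set (path_from Q v) =
    path_point P u ` {k. k \<le> length u \<and> fst P + int (acount (take k u)) = fst Q + int (acount (take k v))}"
  using assms by (auto simp: set_path_from path_point_eq_iff)

lemma set_path_from_Int_eq_singleton:
  assumes "length v = length u" and "fst P + snd P = fst Q + snd Q"
  shows "set (path_from P u) \<inter> set (path_from Q v) = {path_point P u k\<^sub>0} \<longleftrightarrow>
    k\<^sub>0 \<le> length u \<and> fst P + int (acount (take k\<^sub>0 u)) = fst Q + int (acount (take k\<^sub>0 v)) \<and>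
    (\<forall>k \<le> length u. k \<noteq> k\<^sub>0 \<longrightarrow> fst P + int (acount (take k u)) \<noteq> fst Q + int (acount (take k v)))"
proof -
  have "set (path_from P u) \<inter> set (path_from Q v) = {path_point P u k\<^sub>0} \<longleftrightarrow>
      {k. k \<le> length u \<and> fst P + int (acount (take k u)) = fst Q + int (acount (take k v))} = {k\<^sub>0}"
    using inj_image_eq_iff[OF inj_path_point, of P u _ "{k\<^sub>0}"]
    by (simp add: set_path_from_Int[OF assms])
  also have "\<dots> \<longleftrightarrow>
      k\<^sub>0 \<le> length u \<and> fst P + int (acount (take k\<^sub>0 u)) = fst Q + int (acount (take k\<^sub>0 v)) \<and>
      (\<forall>k \<le> length u. k \<noteq> k\<^sub>0 \<longrightarrow> fst P + int (acount (take k u)) \<noteq> fst Q + int (acount (take k v)))"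
    unfolding set_eq_iff by blast
  finally show ?thesis .
qed

lemma path_from_Int_eq_start_iff:
  assumes "length w = length u"
  shows "set (path_from P w) \<inter> set (path_from P u) = {P} \<longleftrightarrow> prefix_separated u w"
proof -
  have "path_point P w 0 = P"
    by (simp add: path_point_def)
  then show ?thesis
    using set_path_from_Int_eq_singleton[of u w P P 0] assms
    by (simp add: prefix_separated_def eq_commute[of "acount (take _ w)"]) blast
qed

lemma path_from_Int_eq_end_iff:
  assumes "length w = length u"
    and C: "path_point P u (length u) = C" "path_point Q w (length w) = C"
  shows "set (path_from P u) \<inter> set (path_from Q w) = {C} \<longleftrightarrow> suffix_separated u w"
proof -
  have end_eq: "fst P + int (acount u) = fst Q + int (acount w)"
    and antidiagonal: "fst P + snd P = fst Q + snd Q"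
    using C[unfolded path_point_length] assms by (auto simp: prod_eq_iff)
  have take_iff_drop: "fst P + int (acount (take k u)) = fst Q + int (acount (take k w)) \<longleftrightarrow>
      acount (drop k u) = acount (drop k w)" for k
    using end_eq acount_take_drop[of k u] acount_take_drop[of k w] by linarith
  show ?thesis
    using set_path_from_Int_eq_singleton[OF _ antidiagonal, of w u "length u"] assms C end_eq
    by (simp add: take_iff_drop suffix_separated_def nat_less_le) blast
qed

definition separated_pairs :: "nat \<Rightarrow> nat \<Rightarrow> nat \<Rightarrow> (letter list \<times> letter list) set" where
  "separated_pairs n r\<^sub>1 r\<^sub>2 = {(u, w). length u = n \<and> length w = n \<and> acount u = r\<^sub>1 \<and> acount w = r\<^sub>2 \<and>
     prefix_separated u w \<and> suffix_separated u w}"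

lemma NCount_eq_card_separated_pairs:
  "NCount (int r\<^sub>2 - int r\<^sub>1, int r\<^sub>1 - int r\<^sub>2) (0, 0) (int r\<^sub>2, int n - int r\<^sub>2) =
   card (separated_pairs n r\<^sub>1 r\<^sub>2)"
proof -
  define A where "A = (int r\<^sub>2 - int r\<^sub>1, int r\<^sub>1 - int r\<^sub>2)"
  define O' where "O' = (0 :: int, 0 :: int)"
  define B where "B = (int r\<^sub>2, int n - int r\<^sub>2)"
  define F where "F = (\<lambda>(u, w). (path_from A u, path_from O' w, path_from O' u))"
  have A_to_B: "path_point A u (length u) = B \<longleftrightarrow> length u = n \<and> acount u = r\<^sub>1" for u
    by (auto simp: A_def B_def path_point_length)
  have O'_to_B: "path_point O' w (length w) = B \<longleftrightarrow> length w = n \<and> acount w = r\<^sub>2" for w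
    by (auto simp: O'_def B_def path_point_length)
  have meet_iff: "set (path_from A u) \<inter> set (path_from O' w) = {B} \<and>
      set (path_from O' w) \<inter> set (path_from O' u) = {O'} \<longleftrightarrow>
      prefix_separated u w \<and> suffix_separated u w"
    if "length u = n" "acount u = r\<^sub>1" "length w = n" "acount w = r\<^sub>2" for u w
  proof -
    have "length w = length u" "path_point A u (length u) = B" "path_point O' w (length w) = B"
      using that A_to_B[of u] O'_to_B[of w] by blast+
    then show ?thesis
      using path_from_Int_eq_start_iff path_from_Int_eq_end_iff by blast
  qed
  have "NSet A O' B = F ` separated_pairs n r\<^sub>1 r\<^sub>2"
  proof (intro set_eqI iffI)
    fix t assume "t \<in> NSet A O' B"
    then obtain u w where "t = F (u, w)" "length u = n" "acount u = r\<^sub>1" "length w = n" "acount w = r\<^sub>2"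
      "set (path_from A u) \<inter> set (path_from O' w) = {B}" "set (path_from O' w) \<inter> set (path_from O' u) = {O'}"
      by (auto simp: NSet_def path_between_iff A_to_B O'_to_B F_def)
    with meet_iff show "t \<in> F ` separated_pairs n r\<^sub>1 r\<^sub>2"
      unfolding separated_pairs_def by blast
  next
    fix t assume "t \<in> F ` separated_pairs n r\<^sub>1 r\<^sub>2"
    then obtain u w where "t = F (u, w)" "length u = n" "acount u = r\<^sub>1" "length w = n" "acount w = r\<^sub>2"
      "prefix_separated u w" "suffix_separated u w"
      unfolding separated_pairs_def by blast
    with meet_iff[of u w] show "t \<in> NSet A O' B"
      by (simp add: NSet_def path_between_iff A_to_B O'_to_B F_def path_from_eq_iff)
  qed
  moreover have "inj_on F (separated_pairs n r\<^sub>1 r\<^sub>2)"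
    by (rule inj_onI) (auto simp: F_def path_from_eq_iff)
  ultimately show ?thesis
    unfolding NCount_def A_def O'_def B_def by (simp add: card_image)
qed


instance letter :: finite
proof
  have "(UNIV :: letter set) \<subseteq> {La, Lb}"
    using letter.exhaust by auto
  then show "finite (UNIV :: letter set)"
    by (rule finite_subset) simp
qed

lemma finite_words_of_length: "finite {w :: letter list. length w = n}"
  using finite_lists_length_eq[of "UNIV :: letter set" n] by simp

definition separated_words :: "nat \<Rightarrow> (letter list \<times> letter list) set" where
  "separated_words n = {(u, w). length u = n \<and> length w = n \<and> prefix_separated u w \<and> suffix_separated u w}"

lemma finite_separated_words: "finite (separated_words n)"
  by (rule finite_subset[of _ "{w. length w = n} \<times> {w. length w = n}"])
    (auto simp: separated_words_def finite_words_of_length)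

lemma separated_pairs_subset: "separated_pairs n r\<^sub>1 r\<^sub>2 \<subseteq> separated_words n"
  by (auto simp: separated_pairs_def separated_words_def)

lemma MAU_unbalanced_pairs_eq_image:
  assumes "0 < n"
  shows "{(u, v). length u = n \<and> length v = n \<and> MAU u v \<and> (\<exists>c. count_list u c \<noteq> count_list v c)} =
    (\<lambda>(u, w). (u, rev w)) ` separated_words n"
proof -
  have unbalanced_iff: "(\<exists>c. count_list u c \<noteq> count_list v c) \<longleftrightarrow> acount u \<noteq> acount v"
    if "length v = length u" for u v :: "letter list"
    using that abl_eq_iff[of u v] unfolding abl_eq_def by auto
  have mem_iff: "length u = n \<and> length v = n \<and> MAU u v \<and> (\<exists>c. count_list u c \<noteq> count_list v c) \<longleftrightarrow>
      (u, rev v) \<in> separated_words n" for u v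
  proof (cases "length u = n \<and> length v = n")
    case True
    then show ?thesis
      using MAU_unbalanced_iff_separated[of v u] unbalanced_iff[of v u] assms
      by (simp add: separated_words_def)
  qed (auto simp: separated_words_def)
  have "(\<lambda>(u, w). (u, rev w)) ` separated_words n = {(u, v). (u, rev v) \<in> separated_words n}"
    by (force simp: image_iff)
  then show ?thesis
    by (simp add: mem_iff)
qed

lemma card_separated_words:
  assumes "0 < n"
  shows "card (separated_words n) = 2 * card {(u, w) \<in> separated_words n. acount w < acount u}"
proof -
  let ?G = "{(u, w) \<in> separated_words n. acount w < acount u}"
  have "(w, u) \<in> separated_words n" and "acount u \<noteq> acount w"
    if "(u, w) \<in> separated_words n" for u w
    using that assms prefix_separated_commute[of w u] suffix_separated_commute[of w u]
      suffix_separated_iff[of u w]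
    by (auto simp: separated_words_def)
  then have "separated_words n = ?G \<union> prod.swap ` ?G"
    by (auto simp: image_iff) (metis linorder_neqE_nat)
  then have "card (separated_words n) = card (?G \<union> prod.swap ` ?G)"
    by (rule arg_cong)
  also have "\<dots> = card ?G + card (prod.swap ` ?G)"
    by (rule card_Un_disjoint) (auto intro: finite_subset[OF _ finite_separated_words])
  also have "\<dots> = 2 * card ?G"
    by (simp add: card_image)
  finally show ?thesis .
qed

lemma separated_words_acount_less_eq_UN:
  assumes "2 \<le> n"
  shows "{(u, w) \<in> separated_words n. acount w < acount u} =
    (\<Union>r\<^sub>2\<in>{0..n - 2}. \<Union>r\<^sub>1\<in>{r\<^sub>2 + 2..n}. separated_pairs n r\<^sub>1 r\<^sub>2)"
proof (intro set_eqI iffI)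
  fix x assume "x \<in> {(u, w) \<in> separated_words n. acount w < acount u}"
  then obtain u w where x: "x = (u, w)" and mem: "(u, w) \<in> separated_words n"
    and less: "acount w < acount u"
    by blast
  have "acount u \<noteq> Suc (acount w)"
    using mem separated_acount_ne_Suc[of w u] assms by (simp add: separated_words_def)
  moreover have "acount u \<le> n"
    using mem count_le_length[of u La] by (simp add: separated_words_def)
  ultimately have "acount w \<in> {0..n - 2}" "acount u \<in> {acount w + 2..n}"
    using less by auto
  moreover have "(u, w) \<in> separated_pairs n (acount u) (acount w)"
    using mem by (simp add: separated_pairs_def separated_words_def)
  ultimately show "x \<in> (\<Union>r\<^sub>2\<in>{0..n - 2}. \<Union>r\<^sub>1\<in>{r\<^sub>2 + 2..n}. separated_pairs n r\<^sub>1 r\<^sub>2)"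
    using x by blast
next
  fix x assume "x \<in> (\<Union>r\<^sub>2\<in>{0..n - 2}. \<Union>r\<^sub>1\<in>{r\<^sub>2 + 2..n}. separated_pairs n r\<^sub>1 r\<^sub>2)"
  then obtain r\<^sub>1 r\<^sub>2 where "x \<in> separated_pairs n r\<^sub>1 r\<^sub>2" "r\<^sub>2 < r\<^sub>1"
    by auto
  then show "x \<in> {(u, w) \<in> separated_words n. acount w < acount u}"
    by (auto simp: separated_pairs_def separated_words_def)
qed

lemma card_UN_separated_pairs:
  assumes "finite I" and "\<And>r. finite (J r)"
  shows "card (\<Union>r\<^sub>2\<in>I. \<Union>r\<^sub>1\<in>J r\<^sub>2. separated_pairs n r\<^sub>1 r\<^sub>2) =
    (\<Sum>r\<^sub>2\<in>I. \<Sum>r\<^sub>1\<in>J r\<^sub>2. card (separated_pairs n r\<^sub>1 r\<^sub>2))"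
proof -
  have finite_pairs: "finite (separated_pairs n r\<^sub>1 r\<^sub>2)" for r\<^sub>1 r\<^sub>2
    using finite_subset[OF separated_pairs_subset finite_separated_words] .
  have "card (\<Union>r\<^sub>1\<in>J r\<^sub>2. separated_pairs n r\<^sub>1 r\<^sub>2) = (\<Sum>r\<^sub>1\<in>J r\<^sub>2. card (separated_pairs n r\<^sub>1 r\<^sub>2))" for r\<^sub>2
    using assms(2) finite_pairs by (intro card_UN_disjoint) (auto simp: separated_pairs_def)
  moreover have "card (\<Union>r\<^sub>2\<in>I. \<Union>r\<^sub>1\<in>J r\<^sub>2. separated_pairs n r\<^sub>1 r\<^sub>2) =
      (\<Sum>r\<^sub>2\<in>I. card (\<Union>r\<^sub>1\<in>J r\<^sub>2. separated_pairs n r\<^sub>1 r\<^sub>2))"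
    using assms finite_pairs by (intro card_UN_disjoint) (auto simp: separated_pairs_def)
  ultimately show ?thesis
    by simp
qed

theorem mainTheorem12:
  fixes n :: nat
  assumes "n \<ge> 2"
  shows "card {(u, v). length u = n \<and> length v = n \<and> MAU u v \<and>
                 (\<exists>c. count_list u c \<noteq> count_list v c)}
       = 2 * (\<Sum>r2 = 0..n - 2. \<Sum>r1 = r2 + 2..n.
               NCount (int r2 - int r1, int r1 - int r2) (0, 0) (int r2, int n - int r2))"
proof -
  have "0 < n"
    using assms by simp
  have "inj_on (\<lambda>(u, w). (u, rev w)) (separated_words n)"
    by (rule inj_onI) auto
  then have "card {(u, v). length u = n \<and> length v = n \<and> MAU u v \<and>
                 (\<exists>c. count_list u c \<noteq> count_list v c)} = card (separated_words n)"
    unfolding MAU_unbalanced_pairs_eq_image[OF \<open>0 < n\<close>] by (rule card_image)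
  also have "\<dots> = 2 * card (\<Union>r\<^sub>2\<in>{0..n - 2}. \<Union>r\<^sub>1\<in>{r\<^sub>2 + 2..n}. separated_pairs n r\<^sub>1 r\<^sub>2)"
    using card_separated_words[OF \<open>0 < n\<close>] separated_words_acount_less_eq_UN[OF assms] by simp
  also have "\<dots> = 2 * (\<Sum>r\<^sub>2 = 0..n - 2. \<Sum>r\<^sub>1 = r\<^sub>2 + 2..n. card (separated_pairs n r\<^sub>1 r\<^sub>2))"
    by (simp add: card_UN_separated_pairs)
  finally show ?thesis
    by (simp add: NCount_eq_card_separated_pairs)
qed

end
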